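(* Let $M$ be a countable transitive $\aleph_0$-categorical structure with no algebraicity admitting weak elimination of imaginaries. For all distinct $a,b\in M$ and every $2$-type $\tau$ of pairs of distinct elements, there is $k\in\mathbb N$ such that for every finite $A\subseteq M$ there is an alternating $\tau$-path of length $k$ from $a$ to $b$ whose interior is disjoint from $A$. In particular, there are infinitely many alternating $\tau$-paths of length $k$ between $a$ and $b$ with pairwise disjoint interiors.
   Context: $G=\operatorname{Aut}(M)$; a $2$-type is a $G$-orbit on $M^2$, $\mathrm{tp}(cd)$ being the orbit of $(c,d)$. An alternating $\tau$-path between $a$ and $b$ is a sequence of pairwise distinct elements $y_0,\dots,y_{2n}$ with $y_0=a$, $y_{2n}=b$ and $\mathrm{tp}(y_{2i}y_{2i+1})=\mathrm{tp}(y_{2i+2}y_{2i+1})=\tau$ for all $i<n$; its interior is $\{y_1,\dots,y_{2n-1}\}$. No algebraicity: for finite $A\subseteq M$ all orbits of the pointwise stabilizer $G_A$ on $M\setminus A$ are infinite. Weak elimination of imaginaries: every proper open subgroup $V<G$ contains some $G_{\bar a}$ ($\bar a$ a finite tuple) with finite index. *)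

theory Defs
  imports Main "HOL-Library.Countable_Set"
begin

text \<open>A structure is given by a carrier set M and an interpretation
I :: 'r => 'a list => bool; a relation symbol of the signature is a pair
(r, n) with n the length of the argument list (so relations of every arity
are allowed). Only argument lists with entries in the carrier matter.\<close>

datatype 'r fm =
    Eq nat nat
  | Rel 'r "nat list"
  | Neg "'r fm"
  | Conj "'r fm" "'r fm"
  | Ex nat "'r fm"

fun sat :: "'a set \<Rightarrow> ('r \<Rightarrow> 'a list \<Rightarrow> bool) \<Rightarrow> 'r fm \<Rightarrow> (nat \<Rightarrow> 'a) \<Rightarrow> bool" where
  "sat M I (Eq i j) v = (v i = v j)"
| "sat M I (Rel r xs) v = I r (map v xs)"
| "sat M I (Neg \<phi>) v = (\<not> sat M I \<phi> v)"
| "sat M I (Conj \<phi> \<psi>) v = (sat M I \<phi> v \<and> sat M I \<psi> v)"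
| "sat M I (Ex x \<phi>) v = (\<exists>a\<in>M. sat M I \<phi> (v(x := a)))"

definition models :: "'a set \<Rightarrow> ('r \<Rightarrow> 'a list \<Rightarrow> bool) \<Rightarrow> 'r fm \<Rightarrow> bool" where
  "models M I \<phi> = (\<forall>v. (\<forall>i. v i \<in> M) \<longrightarrow> sat M I \<phi> v)"

definition model_of_theory ::
  "'b set \<Rightarrow> ('r \<Rightarrow> 'b list \<Rightarrow> bool) \<Rightarrow> 'a set \<Rightarrow> ('r \<Rightarrow> 'a list \<Rightarrow> bool) \<Rightarrow> bool" where
  "model_of_theory N J M I = (N \<noteq> {} \<and> (\<forall>\<phi>. models M I \<phi> \<longrightarrow> models N J \<phi>))"

definition iso ::
  "('a \<Rightarrow> 'b) \<Rightarrow> 'a set \<Rightarrow> ('r \<Rightarrow> 'a list \<Rightarrow> bool) \<Rightarrow> 'b set \<Rightarrow> ('r \<Rightarrow> 'b list \<Rightarrow> bool) \<Rightarrow> bool" where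
  "iso f M I N J = (bij_betw f M N \<and>
     (\<forall>r xs. set xs \<subseteq> M \<longrightarrow> (I r xs \<longleftrightarrow> J r (map f xs))))"

text \<open>Countable models are taken, without loss
of generality, with carrier a subset of nat.\<close>
definition aleph0_categorical :: "'a set \<Rightarrow> ('r \<Rightarrow> 'a list \<Rightarrow> bool) \<Rightarrow> bool" where
  "aleph0_categorical M I = (\<forall>(N :: nat set) J. infinite N \<longrightarrow> model_of_theory N J M I
      \<longrightarrow> (\<exists>f. iso f N J M I))"

definition Aut :: "'a set \<Rightarrow> ('r \<Rightarrow> 'a list \<Rightarrow> bool) \<Rightarrow> ('a \<Rightarrow> 'a) set" where
  "Aut M I = {g. iso g M I M I \<and> (\<forall>x. x \<notin> M \<longrightarrow> g x = x)}"

definition stab :: "'a set \<Rightarrow> ('r \<Rightarrow> 'a list \<Rightarrow> bool) \<Rightarrow> 'a set \<Rightarrow> ('a \<Rightarrow> 'a) set" where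
  "stab M I A = {g \<in> Aut M I. \<forall>x\<in>A. g x = x}"

definition transitive_str :: "'a set \<Rightarrow> ('r \<Rightarrow> 'a list \<Rightarrow> bool) \<Rightarrow> bool" where
  "transitive_str M I = (\<forall>a\<in>M. \<forall>b\<in>M. \<exists>g\<in>Aut M I. g a = b)"

definition no_algebraicity :: "'a set \<Rightarrow> ('r \<Rightarrow> 'a list \<Rightarrow> bool) \<Rightarrow> bool" where
  "no_algebraicity M I = (\<forall>A. finite A \<longrightarrow> A \<subseteq> M \<longrightarrow>
      (\<forall>c \<in> M - A. infinite ((\<lambda>g. g c) ` stab M I A)))"

definition subgroup_of :: "('a \<Rightarrow> 'a) set \<Rightarrow> ('a \<Rightarrow> 'a) set \<Rightarrow> bool" where
  "subgroup_of V G = (V \<subseteq> G \<and> id \<in> V \<and> (\<forall>g\<in>V. \<forall>h\<in>V. g \<circ> h \<in> V)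
      \<and> (\<forall>g\<in>V. \<exists>h\<in>V. h \<circ> g = id))"

text \<open>Open subgroups for the topology of pointwise convergence: subgroups
containing the pointwise stabiliser of some finite set.\<close>
definition open_subgroup :: "'a set \<Rightarrow> ('r \<Rightarrow> 'a list \<Rightarrow> bool) \<Rightarrow> ('a \<Rightarrow> 'a) set \<Rightarrow> bool" where
  "open_subgroup M I V = (subgroup_of V (Aut M I) \<and>
      (\<exists>B. finite B \<and> B \<subseteq> M \<and> stab M I B \<subseteq> V))"

definition finite_index :: "('a \<Rightarrow> 'a) set \<Rightarrow> ('a \<Rightarrow> 'a) set \<Rightarrow> bool" where
  "finite_index H V = finite {(\<lambda>g. h \<circ> g) ` H | h. h \<in> V}"

definition weak_EI :: "'a set \<Rightarrow> ('r \<Rightarrow> 'a list \<Rightarrow> bool) \<Rightarrow> bool" where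
  "weak_EI M I = (\<forall>V. open_subgroup M I V \<longrightarrow> V \<noteq> Aut M I \<longrightarrow>
      (\<exists>A. finite A \<and> A \<subseteq> M \<and> stab M I A \<subseteq> V \<and> finite_index (stab M I A) V))"

definition tp :: "'a set \<Rightarrow> ('r \<Rightarrow> 'a list \<Rightarrow> bool) \<Rightarrow> 'a \<Rightarrow> 'a \<Rightarrow> ('a \<times> 'a) set" where
  "tp M I c d = {(g c, g d) | g. g \<in> Aut M I}"

text \<open>An alternating tau-path is the list [y_0, ..., y_{2n}]; its length is
the number of steps 2n (= length of the list minus one).\<close>
definition alt_path :: "'a set \<Rightarrow> ('a \<times> 'a) set \<Rightarrow> 'a \<Rightarrow> 'a \<Rightarrow> 'a list \<Rightarrow> bool" where
  "alt_path M \<tau> a b ys = (odd (length ys) \<and> distinct ys \<and> set ys \<subseteq> M \<and>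
      ys ! 0 = a \<and> ys ! (length ys - 1) = b \<and>
      (\<forall>i. 2 * i + 2 < length ys \<longrightarrow>
          (ys ! (2*i), ys ! (2*i+1)) \<in> \<tau> \<and> (ys ! (2*i+2), ys ! (2*i+1)) \<in> \<tau>))"

definition path_len :: "'a list \<Rightarrow> nat" where
  "path_len ys = length ys - 1"

definition interior :: "'a list \<Rightarrow> 'a set" where
  "interior ys = set (butlast (tl ys))"

end

theory Submission imports Defs begin

text \<open>Call x and y connected if x = y or some alternating \<open>\<tau>\<close>-path joins them. Since \<open>\<tau>\<close> is
an orbit, connectedness is an Aut-invariant relation; it is symmetric (reverse a path) and
transitive, because without algebraicity the interior of one path can be moved off the other
by an automorphism fixing its endpoints, after which the two paths concatenate. The setwise
stabiliser of the class of a is therefore an open subgroup containing the stabilisers of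
all points of the class. If it were proper, weak elimination of imaginaries would give a
finite set A whose stabiliser has finite index in it; the finitely many translates of A form
a finite set invariant under the stabiliser of every point of the class, so without
algebraicity A would be empty as soon as the class has two points, which it does. Hence the
stabiliser is all of Aut, and transitivity connects a to b by a path of some length k.
Moving its interior off a finite set again uses no algebraicity, and iterating this
yields infinitely many paths of length k with disjoint interiors.\<close>

lemma id_in_Aut: "id \<in> Aut M I"
  unfolding Aut_def iso_def by (auto simp: bij_betw_def)

lemma Aut_in_carrier: "g \<in> Aut M I \<Longrightarrow> x \<in> M \<Longrightarrow> g x \<in> M"
  unfolding Aut_def iso_def bij_betw_def by auto

lemma Aut_inj_on: "g \<in> Aut M I \<Longrightarrow> inj_on g M"
  unfolding Aut_def iso_def bij_betw_def by auto

lemma Aut_comp: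
  assumes g: "g \<in> Aut M I" and h: "h \<in> Aut M I"
  shows "g \<circ> h \<in> Aut M I"
proof -
  have "bij_betw (g \<circ> h) M M"
    using g h unfolding Aut_def iso_def by (auto intro: bij_betw_trans)
  moreover have "I r xs = I r (map (g \<circ> h) xs)" if "set xs \<subseteq> M" for r xs
  proof -
    have "set (map h xs) \<subseteq> M" using that Aut_in_carrier[OF h] by auto
    then have "I r (map h xs) = I r (map g (map h xs))" using g unfolding Aut_def iso_def by auto
    moreover have "I r xs = I r (map h xs)" using h that unfolding Aut_def iso_def by auto
    ultimately show ?thesis by simp
  qed
  ultimately show ?thesis using g h unfolding Aut_def iso_def by auto
qed

lemma Aut_left_inverse:
  assumes g: "g \<in> Aut M I"
  shows "\<exists>h\<in>Aut M I. h \<circ> g = id"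
proof -
  define h where "h = (\<lambda>x. if x \<in> M then inv_into M g x else x)"
  have bij_g: "bij_betw g M M" using g unfolding Aut_def iso_def by auto
  have "bij_betw (inv_into M g) M M"
    using bij_betw_inv_into[OF bij_g] by (simp add: bij_betw_imp_surj_on[OF bij_g])
  then have bij_h: "bij_betw h M M" unfolding h_def by (rule bij_betw_cong[THEN iffD1, rotated]) auto
  have g_h: "g (h x) = x" if "x \<in> M" for x
    using that bij_g unfolding h_def by (simp add: bij_betw_imp_surj_on f_inv_into_f)
  have "h \<circ> g = id"
  proof
    fix x
    show "(h \<circ> g) x = id x"
    proof (cases "x \<in> M")
      case True
      then show ?thesis using bij_g Aut_in_carrier[OF g True] by (simp add: h_def bij_betw_def)
    next
      case False
      then have "g x = x" using g unfolding Aut_def by auto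
      then show ?thesis using False unfolding h_def by simp
    qed
  qed
  moreover have "I r xs = I r (map h xs)" if "set xs \<subseteq> M" for r xs
  proof -
    have "set (map h xs) \<subseteq> M" using that bij_betwE[OF bij_h] by auto
    then have "I r (map h xs) = I r (map g (map h xs))" using g unfolding Aut_def iso_def by auto
    moreover have "map g (map h xs) = xs" using that g_h by (induction xs) auto
    ultimately show ?thesis by simp
  qed
  then have "h \<in> Aut M I" using bij_h unfolding Aut_def iso_def h_def by auto
  ultimately show ?thesis by blast
qed

lemma tp_Aut_invariant: "(x, y) \<in> tp M I c d \<Longrightarrow> g \<in> Aut M I \<Longrightarrow> (g x, g y) \<in> tp M I c d"
proof -
  assume "(x, y) \<in> tp M I c d" "g \<in> Aut M I"
  then obtain h where "h \<in> Aut M I" "x = h c" "y = h d" by (auto simp: tp_def)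
  moreover have "g \<circ> h \<in> Aut M I" using Aut_comp \<open>g \<in> Aut M I\<close> \<open>h \<in> Aut M I\<close> by blast
  ultimately show ?thesis unfolding tp_def by (auto intro!: exI[of _ "g \<circ> h"])
qed

lemma stab_move_finite_away:
  assumes na: "no_algebraicity M I" and F: "finite F" "F \<subseteq> M"
    and X: "finite X" "X \<subseteq> M - F" and Y: "finite Y"
  shows "\<exists>g\<in>stab M I F. g ` X \<inter> Y = {}"
  using X
proof (induction X rule: finite_induct)
  case empty
  then show ?case using id_in_Aut[of M I] by (auto simp: stab_def)
next
  case (insert x X)
  then obtain g where g: "g \<in> stab M I F" "g ` X \<inter> Y = {}" by auto
  have gA: "g \<in> Aut M I" using g by (simp add: stab_def)
  let ?F = "F \<union> g ` X"
  have x: "x \<in> M" "x \<notin> F" using insert by auto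
  have "g x \<notin> F"
  proof
    assume "g x \<in> F"
    then have "g (g x) = g x" using g by (simp add: stab_def)
    then have "g x = x" using Aut_inj_on[OF gA] Aut_in_carrier[OF gA x(1)] x(1) by (meson inj_onD)
    with \<open>g x \<in> F\<close> x show False by simp
  qed
  moreover have "g x \<notin> g ` X" using Aut_inj_on[OF gA] insert by (auto simp: inj_on_def)
  ultimately have "g x \<in> M - ?F" using Aut_in_carrier[OF gA x(1)] by blast
  moreover have "finite ?F" "?F \<subseteq> M" using F insert Aut_in_carrier[OF gA] by auto
  ultimately have "infinite ((\<lambda>h. h (g x)) ` stab M I ?F)"
    using na unfolding no_algebraicity_def by blast
  then obtain h where h: "h \<in> stab M I ?F" "h (g x) \<notin> Y"
    using Y by (metis finite_subset image_subsetI)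
  have "h \<circ> g \<in> stab M I F" using g h Aut_comp by (auto simp: stab_def)
  moreover have "(h \<circ> g) ` insert x X \<inter> Y = {}" using g h by (auto simp: stab_def)
  ultimately show ?case by blast
qed

lemma stab_invariant_finite_subset_singleton:
  assumes na: "no_algebraicity M I" and S: "finite S" "S \<subseteq> M" and y: "y \<in> M"
    and inv: "\<And>g s. g \<in> stab M I {y} \<Longrightarrow> s \<in> S \<Longrightarrow> g s \<in> S"
  shows "S \<subseteq> {y}"
proof
  fix s assume s: "s \<in> S"
  show "s \<in> {y}"
  proof (rule ccontr)
    assume "s \<notin> {y}"
    then have "infinite ((\<lambda>g. g s) ` stab M I {y})"
      using na s S y unfolding no_algebraicity_def by blast
    moreover have "(\<lambda>g. g s) ` stab M I {y} \<subseteq> S" using inv s by blast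
    ultimately show False using S(1) finite_subset by blast
  qed
qed

section \<open>Open subgroups and invariant equivalence relations\<close>

lemma finite_index_translates_finite:
  assumes "finite_index (stab M I A) V" "finite A"
  shows "finite (\<Union>h\<in>V. h ` A)"
proof -
  have image_coset: "(\<Union>g\<in>stab M I A. (h \<circ> g) ` A) = h ` A" for h :: "'a \<Rightarrow> 'a"
  proof -
    have "(h \<circ> g) ` A = h ` A" if "g \<in> stab M I A" for g
      using that by (force simp: stab_def image_comp[symmetric])
    then show ?thesis using id_in_Aut[of M I] by (auto simp: stab_def)
  qed
  have "(\<lambda>h. h ` A) ` V = (\<lambda>K. \<Union>k\<in>K. k ` A) ` ((\<lambda>h. (\<lambda>g. h \<circ> g) ` stab M I A) ` V)"
    unfolding image_image image_coset ..
  also have "(\<lambda>h. (\<lambda>g. h \<circ> g) ` stab M I A) ` V = {(\<lambda>g. h \<circ> g) ` stab M I A | h. h \<in> V}" by blast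
  finally have cosets: "(\<lambda>h. h ` A) ` V = (\<lambda>K. \<Union>k\<in>K. k ` A) ` {(\<lambda>g. h \<circ> g) ` stab M I A | h. h \<in> V}" .
  have "finite ((\<lambda>h. h ` A) ` V)" using assms(1) unfolding cosets finite_index_def by blast
  then show ?thesis using assms(2) by blast
qed

lemma proper_open_subgroup_stab_point_unique:
  assumes na: "no_algebraicity M I" and wei: "weak_EI M I"
    and V: "open_subgroup M I V" "V \<noteq> Aut M I"
    and y: "y \<in> M" "stab M I {y} \<subseteq> V" and z: "z \<in> M" "stab M I {z} \<subseteq> V"
  shows "y = z"
proof (rule ccontr)
  assume "y \<noteq> z"
  obtain A where A: "finite A" "A \<subseteq> M" "stab M I A \<subseteq> V" "finite_index (stab M I A) V"
    using wei V unfolding weak_EI_def by blast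
  have "subgroup_of V (Aut M I)" using V(1) by (simp add: open_subgroup_def)
  then have V_Aut: "V \<subseteq> Aut M I" and id_V: "id \<in> V" and comp_V: "\<And>g h. g \<in> V \<Longrightarrow> h \<in> V \<Longrightarrow> g \<circ> h \<in> V"
    by (simp_all add: subgroup_of_def)
  define S where "S = (\<Union>h\<in>V. h ` A)"
  have S: "finite S" "S \<subseteq> M"
    using finite_index_translates_finite[OF A(4,1)] V_Aut A(2) by (auto simp: S_def intro: Aut_in_carrier)
  have inv: "g s \<in> S" if "stab M I {x} \<subseteq> V" "g \<in> stab M I {x}" "s \<in> S" for x g s
  proof -
    obtain h w where h: "h \<in> V" "w \<in> A" "s = h w" using \<open>s \<in> S\<close> by (auto simp: S_def)
    have "g \<circ> h \<in> V" using comp_V that(1,2) h(1) by blast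
    then show ?thesis unfolding S_def using h(2,3) by (metis UN_I comp_apply imageI)
  qed
  have "S \<subseteq> {y}" using inv[OF y(2)] by (rule stab_invariant_finite_subset_singleton[OF na S y(1)])
  moreover have "S \<subseteq> {z}" using inv[OF z(2)] by (rule stab_invariant_finite_subset_singleton[OF na S z(1)])
  moreover have "A \<subseteq> S" using id_V by (auto simp: S_def)
  ultimately have "A = {}" using \<open>y \<noteq> z\<close> by blast
  then have "Aut M I \<subseteq> V" using A(3) by (simp add: stab_def)
  then show False using V(2) V_Aut by blast
qed

lemma subgroup_of_class_stabiliser:
  assumes refl: "\<And>x. E x x" and trans: "\<And>x y z. E x y \<Longrightarrow> E y z \<Longrightarrow> E x z"
    and sym: "\<And>x y. E x y \<Longrightarrow> E y x"
    and Aut: "\<And>g x y. g \<in> Aut M I \<Longrightarrow> E x y \<Longrightarrow> E (g x) (g y)"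
  shows "subgroup_of {g \<in> Aut M I. E (g a) a} (Aut M I)"
  unfolding subgroup_of_def
proof (intro conjI ballI)
  show "{g \<in> Aut M I. E (g a) a} \<subseteq> Aut M I" by blast
  show "id \<in> {g \<in> Aut M I. E (g a) a}" using id_in_Aut[of M I] refl[of a] by simp
next
  fix g h assume "g \<in> {g \<in> Aut M I. E (g a) a}" "h \<in> {g \<in> Aut M I. E (g a) a}"
  then have g: "g \<in> Aut M I" "E (g a) a" and h: "h \<in> Aut M I" "E (h a) a" by simp_all
  have "E (g (h a)) a" using trans[OF Aut[OF g(1) h(2)] g(2)] .
  then show "g \<circ> h \<in> {g \<in> Aut M I. E (g a) a}" using Aut_comp[OF g(1) h(1)] by simp
next
  fix g assume "g \<in> {g \<in> Aut M I. E (g a) a}"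
  then have g: "g \<in> Aut M I" "E (g a) a" by simp_all
  obtain h where h: "h \<in> Aut M I" "h \<circ> g = id" using Aut_left_inverse[OF g(1)] by blast
  have "E (h (g a)) (h a)" using Aut[OF h(1) g(2)] .
  moreover have "h (g a) = a" using h(2) by (metis comp_apply id_apply)
  ultimately have "E (h a) a" using sym by simp
  then show "\<exists>h\<in>{g \<in> Aut M I. E (g a) a}. h \<circ> g = id" using h by blast
qed

text \<open>Weak elimination of imaginaries makes the automorphism group primitive.\<close>

lemma invariant_equivalence_universal:
  assumes na: "no_algebraicity M I" and wei: "weak_EI M I" and tr: "transitive_str M I"
    and refl: "\<And>x. E x x" and trans: "\<And>x y z. E x y \<Longrightarrow> E y z \<Longrightarrow> E x z"
    and sym: "\<And>x y. E x y \<Longrightarrow> E y x"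
    and Aut: "\<And>g x y. g \<in> Aut M I \<Longrightarrow> E x y \<Longrightarrow> E (g x) (g y)"
    and a: "a \<in> M" and e: "e \<in> M" "e \<noteq> a" "E a e" and b: "b \<in> M"
  shows "E a b"
proof -
  define V where "V = {g \<in> Aut M I. E (g a) a}"
  have stab_le: "stab M I {y} \<subseteq> V" if "E a y" for y
  proof
    fix g assume "g \<in> stab M I {y}"
    then have g: "g \<in> Aut M I" "g y = y" by (auto simp: stab_def)
    then have "E (g a) y" using Aut[OF g(1) that] by simp
    then show "g \<in> V" using g(1) sym[OF that] trans by (auto simp: V_def)
  qed
  have "subgroup_of V (Aut M I)"
    unfolding V_def using refl trans sym Aut by (rule subgroup_of_class_stabiliser)
  then have "open_subgroup M I V"
    unfolding open_subgroup_def using stab_le[OF refl[of a]] a by blast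
  moreover have "a = e" if "V \<noteq> Aut M I"
    using proper_open_subgroup_stab_point_unique[OF na wei _ that a stab_le[OF refl[of a]] e(1)
        stab_le[OF e(3)]] \<open>open_subgroup M I V\<close> .
  ultimately have "V = Aut M I" using e(2) by blast
  obtain g where "g \<in> Aut M I" "g a = b" using tr a b unfolding transitive_str_def by blast
  then show ?thesis using \<open>V = Aut M I\<close> sym by (auto simp: V_def)
qed

section \<open>Alternating paths\<close>

definition alternating :: "('a \<times> 'a) set \<Rightarrow> 'a list \<Rightarrow> bool" where
  "alternating \<tau> ys \<longleftrightarrow> (\<forall>j. Suc j < length ys \<longrightarrow>
     (if even j then (ys ! j, ys ! Suc j) else (ys ! Suc j, ys ! j)) \<in> \<tau>)"

lemma alt_path_iff_alternating:
  "alt_path M \<tau> a b ys \<longleftrightarrow> odd (length ys) \<and> distinct ys \<and> set ys \<subseteq> M \<and>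
      ys ! 0 = a \<and> ys ! (length ys - 1) = b \<and> alternating \<tau> ys"
proof -
  have "(\<forall>i. 2 * i + 2 < length ys \<longrightarrow>
          (ys ! (2*i), ys ! (2*i+1)) \<in> \<tau> \<and> (ys ! (2*i+2), ys ! (2*i+1)) \<in> \<tau>)
        \<longleftrightarrow> alternating \<tau> ys" if odd: "odd (length ys)"
  proof
    assume pairs: "\<forall>i. 2 * i + 2 < length ys \<longrightarrow>
          (ys ! (2*i), ys ! (2*i+1)) \<in> \<tau> \<and> (ys ! (2*i+2), ys ! (2*i+1)) \<in> \<tau>"
    show "alternating \<tau> ys" unfolding alternating_def
    proof (intro allI impI)
      fix j assume j: "Suc j < length ys"
      show "(if even j then (ys ! j, ys ! Suc j) else (ys ! Suc j, ys ! j)) \<in> \<tau>"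
      proof (cases "even j")
        case True
        then obtain i where i: "j = 2 * i" by blast
        \<comment> \<open>j + 1 < length ys forces j + 2 < length ys, as the length is odd and j even\<close>
        have "2 * i + 2 \<noteq> length ys" using odd by presburger
        then show ?thesis using pairs j i True by auto
      next
        case False
        then obtain i where "j = 2 * i + 1" using oddE by blast
        then show ?thesis using pairs j False by (auto simp: numeral_2_eq_2)
      qed
    qed
  next
    assume alt: "alternating \<tau> ys"
    show "\<forall>i. 2 * i + 2 < length ys \<longrightarrow>
          (ys ! (2*i), ys ! (2*i+1)) \<in> \<tau> \<and> (ys ! (2*i+2), ys ! (2*i+1)) \<in> \<tau>"
    proof (intro allI impI conjI)
      fix i assume i: "2 * i + 2 < length ys"
      show "(ys ! (2*i), ys ! (2*i+1)) \<in> \<tau>"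
        using alt[unfolded alternating_def, rule_format, of "2 * i"] i by simp
      have "(if even (2*i+1) then (ys ! (2*i+1), ys ! Suc (2*i+1)) else (ys ! Suc (2*i+1), ys ! (2*i+1)))
          \<in> \<tau>"
        by (rule alt[unfolded alternating_def, rule_format]) (use i in simp)
      moreover have "odd (2*i+1)" "Suc (2*i+1) = 2*i+2" by simp_all
      ultimately show "(ys ! (2*i+2), ys ! (2*i+1)) \<in> \<tau>" by metis
    qed
  qed
  then show ?thesis unfolding alt_path_def by blast
qed

lemma alt_path_shape:
  assumes "alt_path M \<tau> a b ys" "a \<noteq> b"
  shows "ys = a # butlast (tl ys) @ [b]" "butlast (tl ys) \<noteq> []"
proof -
  have ys: "odd (length ys)" "ys ! 0 = a" "ys ! (length ys - 1) = b"
    using assms(1) by (auto simp: alt_path_def)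
  obtain x xs where xs: "ys = x # xs" using ys(1) by (cases ys) auto
  then have "xs \<noteq> []" using ys assms(2) by auto
  then have "xs = butlast xs @ [last xs]" "last xs = b"
    using xs ys(3) by (simp, simp add: last_conv_nth)
  moreover have "butlast xs \<noteq> []" using ys(1) xs \<open>xs \<noteq> []\<close> by (cases xs) auto
  moreover have "x = a" using xs ys(2) by simp
  ultimately show "ys = a # butlast (tl ys) @ [b]" "butlast (tl ys) \<noteq> []"
    using xs by (metis list.sel(3))+
qed

lemma alt_path_interior:
  assumes p: "alt_path M \<tau> a b ys" and ab: "a \<noteq> b"
  shows "interior ys \<subseteq> M - {a, b}" "interior ys \<noteq> {}" "finite (interior ys)"
    "set ys = insert a (insert b (interior ys))" "set (butlast ys) = insert a (interior ys)"
proof -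
  note shape = alt_path_shape[OF p ab]
  have "distinct ys" "set ys \<subseteq> M" using p by (auto simp: alt_path_def)
  then show "interior ys \<subseteq> M - {a, b}" unfolding interior_def by (subst (asm) (1 2) shape(1)) auto
  show "interior ys \<noteq> {}" "finite (interior ys)" using shape(2) by (simp_all add: interior_def)
  show "set ys = insert a (insert b (interior ys))" unfolding interior_def by (subst shape(1)) auto
  show "set (butlast ys) = insert a (interior ys)"
    unfolding interior_def by (subst shape(1)) (simp add: butlast_append)
qed

lemma interior_map: "interior (map g ys) = g ` interior ys"
  unfolding interior_def by (simp flip: map_butlast map_tl)

lemma alt_path_map:
  assumes p: "alt_path M (tp M I c d) a b ys" and g: "g \<in> Aut M I"
  shows "alt_path M (tp M I c d) (g a) (g b) (map g ys)"
proof -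
  have ys: "odd (length ys)" "distinct ys" "set ys \<subseteq> M" "ys ! 0 = a" "ys ! (length ys - 1) = b"
    "alternating (tp M I c d) ys"
    using p by (simp_all add: alt_path_iff_alternating)
  have "ys \<noteq> []" using ys(1) by auto
  moreover have "distinct (map g ys)"
    using ys(2,3) Aut_inj_on[OF g] by (simp add: distinct_map inj_on_subset)
  moreover have "alternating (tp M I c d) (map g ys)"
    using ys(6) tp_Aut_invariant[OF _ g] by (auto simp: alternating_def split: if_splits)
  ultimately show ?thesis using ys Aut_in_carrier[OF g] by (auto simp: alt_path_iff_alternating)
qed

lemma alt_path_rev:
  assumes "alt_path M \<tau> a b ys"
  shows "alt_path M \<tau> b a (rev ys)"
proof -
  have ys: "odd (length ys)" "distinct ys" "set ys \<subseteq> M" "ys ! 0 = a" "ys ! (length ys - 1) = b"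
    "alternating \<tau> ys"
    using assms by (simp_all add: alt_path_iff_alternating)
  obtain m where m: "length ys = 2 * m + 1" using ys(1) oddE by blast
  have "alternating \<tau> (rev ys)" unfolding alternating_def
  proof (intro allI impI)
    fix j assume j: "Suc j < length (rev ys)"
    \<comment> \<open>position j of the reversed path is position 2m - j, which has the other parity\<close>
    define j' where "j' = 2 * m - 1 - j"
    have "rev ys ! j = ys ! Suc j'" "rev ys ! Suc j = ys ! j'"
      using j m by (simp_all add: rev_nth j'_def Suc_diff_Suc)
    moreover have "Suc j' < length ys" "even j \<longleftrightarrow> odd j'"
      using j m by (auto simp: j'_def)
    ultimately show "(if even j then (rev ys ! j, rev ys ! Suc j) else (rev ys ! Suc j, rev ys ! j)) \<in> \<tau>"
      using ys(6) unfolding alternating_def by (metis (full_types))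
  qed
  moreover have "rev ys ! 0 = b" "rev ys ! (length ys - 1) = a" using ys m by (auto simp: rev_nth)
  ultimately show ?thesis using ys by (simp add: alt_path_iff_alternating)
qed

lemma alt_path_append:
  assumes p: "alt_path M \<tau> x y ys" and q: "alt_path M \<tau> y z zs"
    and disj: "set (butlast ys) \<inter> set zs = {}"
  shows "alt_path M \<tau> x z (butlast ys @ zs)"
proof -
  have ys: "odd (length ys)" "distinct ys" "set ys \<subseteq> M" "ys ! 0 = x" "ys ! (length ys - 1) = y"
    "alternating \<tau> ys"
    using p by (simp_all add: alt_path_iff_alternating)
  have zs: "odd (length zs)" "distinct zs" "set zs \<subseteq> M" "zs ! 0 = y" "zs ! (length zs - 1) = z"
    "alternating \<tau> zs"
    using q by (simp_all add: alt_path_iff_alternating)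
  have "ys \<noteq> []" using ys(1) by auto
  obtain m where m: "length (butlast ys) = 2 * m" using ys(1) by (auto elim!: oddE)
  let ?c = "butlast ys @ zs"
  have c_ys: "?c ! j = ys ! j" if "j \<le> 2 * m" for j
    using that m ys(5) zs(4) \<open>ys \<noteq> []\<close>
    by (cases "j = 2 * m") (auto simp: nth_append nth_butlast)
  have c_zs: "?c ! j = zs ! (j - 2 * m)" if "j \<ge> 2 * m" for j using that m by (simp add: nth_append)
  have "alternating \<tau> ?c" unfolding alternating_def
  proof (intro allI impI)
    fix j assume j: "Suc j < length ?c"
    show "(if even j then (?c ! j, ?c ! Suc j) else (?c ! Suc j, ?c ! j)) \<in> \<tau>"
    proof (cases "j < 2 * m")
      case True
      then have "Suc j < length ys" using m by simp
      then show ?thesis using ys(6) True c_ys[of j] c_ys[of "Suc j"] unfolding alternating_def by auto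
    next
      case False
      then have "Suc (j - 2 * m) < length zs" "Suc (j - 2 * m) = Suc j - 2 * m"
        "even j \<longleftrightarrow> even (j - 2 * m)"
        using j m by (simp_all add: Suc_diff_le)
      then show ?thesis using zs(6) False c_zs[of j] c_zs[of "Suc j"] unfolding alternating_def
        by (metis (full_types) le_SucI not_less)
    qed
  qed
  moreover have "?c ! (length ?c - 1) = z"
    using m zs(1,5) by (auto simp: nth_append elim!: oddE)
  ultimately show ?thesis
    using ys zs disj m c_ys[of 0]
    by (auto simp: alt_path_iff_alternating distinct_butlast dest: in_set_butlastD)
qed

lemma alt_path_interior_avoiding:
  assumes na: "no_algebraicity M I" and p: "alt_path M (tp M I c d) x y ys" and xy: "x \<noteq> y"
    and Y: "finite Y"
  shows "\<exists>zs. alt_path M (tp M I c d) x y zs \<and> path_len zs = path_len ys \<and> interior zs \<inter> Y = {}"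
proof -
  note int = alt_path_interior[OF p xy]
  have "x \<in> M" "y \<in> M" using p int(4) by (auto simp: alt_path_def)
  then obtain g where g: "g \<in> stab M I {x, y}" "g ` interior ys \<inter> Y = {}"
    using stab_move_finite_away[OF na, of "{x, y}" "interior ys" Y] int Y by auto
  then have "g \<in> Aut M I" "g x = x" "g y = y" by (auto simp: stab_def)
  then show ?thesis
    using alt_path_map[OF p, of g] g(2) by (intro exI[of _ "map g ys"]) (simp add: interior_map path_len_def)
qed

section \<open>Connectedness by alternating paths\<close>

definition alt_connected :: "'a set \<Rightarrow> ('a \<times> 'a) set \<Rightarrow> 'a \<Rightarrow> 'a \<Rightarrow> bool" where
  "alt_connected M \<tau> x y \<longleftrightarrow> x = y \<or> (\<exists>ys. alt_path M \<tau> x y ys)"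

lemma alt_connected_sym: "alt_connected M \<tau> x y \<Longrightarrow> alt_connected M \<tau> y x"
  unfolding alt_connected_def using alt_path_rev by metis

lemma alt_connected_Aut:
  "g \<in> Aut M I \<Longrightarrow> alt_connected M (tp M I c d) x y \<Longrightarrow> alt_connected M (tp M I c d) (g x) (g y)"
  unfolding alt_connected_def using alt_path_map by metis

lemma alt_connected_trans:
  assumes na: "no_algebraicity M I"
    and xy: "alt_connected M (tp M I c d) x y" and yz: "alt_connected M (tp M I c d) y z"
  shows "alt_connected M (tp M I c d) x z"
proof (cases "x = y \<or> y = z \<or> x = z")
  case True
  then show ?thesis using xy yz by (auto simp: alt_connected_def)
next
  case False
  then have ne: "x \<noteq> y" "y \<noteq> z" by auto
  obtain ys where ys: "alt_path M (tp M I c d) x y ys" using xy ne(1) by (auto simp: alt_connected_def)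
  obtain zs0 where "alt_path M (tp M I c d) y z zs0" using yz ne(2) by (auto simp: alt_connected_def)
  then obtain zs where zs: "alt_path M (tp M I c d) y z zs" "interior zs \<inter> set ys = {}"
    using alt_path_interior_avoiding[OF na _ ne(2)] by blast
  obtain ys' where ys': "alt_path M (tp M I c d) x y ys'" "interior ys' \<inter> set zs = {}"
    using alt_path_interior_avoiding[OF na ys ne(1)] by blast
  have "x \<in> set ys" using alt_path_interior(4)[OF ys ne(1)] by simp
  then have "x \<notin> set zs" using alt_path_interior(4)[OF zs(1) ne(2)] zs(2) False by blast
  then have "set (butlast ys') \<inter> set zs = {}"
    using alt_path_interior(5)[OF ys'(1) ne(1)] ys'(2) by simp
  then show ?thesis using alt_path_append[OF ys'(1) zs(1)] by (auto simp: alt_connected_def)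
qed

lemma alt_connected_nontrivial_class:
  assumes na: "no_algebraicity M I" and tr: "transitive_str M I"
    and cd: "c \<in> M" "d \<in> M" "c \<noteq> d" and a: "a \<in> M"
  shows "\<exists>e\<in>M. e \<noteq> a \<and> alt_connected M (tp M I c d) a e"
proof -
  obtain g where g: "g \<in> Aut M I" "g c = a" using tr cd a unfolding transitive_str_def by blast
  have "g d \<in> M" using Aut_in_carrier[OF g(1) cd(2)] .
  moreover have "g d \<noteq> a" using Aut_inj_on[OF g(1)] cd g(2) by (metis inj_onD)
  ultimately have "infinite ((\<lambda>h. h a) ` stab M I {g d})" using na a unfolding no_algebraicity_def by auto
  then obtain h where h: "h \<in> stab M I {g d}" "h a \<notin> {a, g d}"
    by (metis finite.emptyI finite.insertI finite_subset image_subsetI)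
  then have hA: "h \<in> Aut M I" "h (g d) = g d" by (auto simp: stab_def)
  \<comment> \<open>a and h a share the neighbour g d, so [a, g d, h a] is an alternating path\<close>
  have "(a, g d) \<in> tp M I c d" unfolding tp_def using g by blast
  moreover from this have "(h a, g d) \<in> tp M I c d" using tp_Aut_invariant[OF _ hA(1)] hA(2) by metis
  moreover have "h a \<in> M" using Aut_in_carrier[OF hA(1) a] .
  ultimately have "alt_path M (tp M I c d) a (h a) [a, g d, h a]"
    using h(2) \<open>g d \<in> M\<close> \<open>g d \<noteq> a\<close> a by (auto simp: alt_path_def)
  then show ?thesis using h(2) \<open>h a \<in> M\<close> by (auto simp: alt_connected_def)
qed

lemma alt_connected_universal:
  assumes na: "no_algebraicity M I" and wei: "weak_EI M I" and tr: "transitive_str M I"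
    and cd: "c \<in> M" "d \<in> M" "c \<noteq> d" and ab: "a \<in> M" "b \<in> M"
  shows "alt_connected M (tp M I c d) a b"
proof -
  let ?E = "alt_connected M (tp M I c d)"
  obtain e where e: "e \<in> M" "e \<noteq> a" "?E a e"
    using alt_connected_nontrivial_class[OF na tr cd ab(1)] by blast
  show ?thesis
  proof (rule invariant_equivalence_universal[OF na wei tr, where E = ?E])
    show "?E x x" for x by (simp add: alt_connected_def)
    show "?E x z" if "?E x y" "?E y z" for x y z using alt_connected_trans[OF na that] .
    show "?E y x" if "?E x y" for x y using alt_connected_sym[OF that] .
    show "?E (g x) (g y)" if "g \<in> Aut M I" "?E x y" for g x y using alt_connected_Aut[OF that] .
  qed (fact ab e)+
qed

lemma infinite_disjoint_family_if_avoids_finite: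
  assumes avoid: "\<And>A. finite A \<Longrightarrow> \<exists>x. Q x \<and> F x \<inter> A = {}"
    and F: "\<And>x. Q x \<Longrightarrow> F x \<noteq> {} \<and> finite (F x)"
  shows "\<exists>P. infinite P \<and> (\<forall>x\<in>P. Q x) \<and> (\<forall>x\<in>P. \<forall>y\<in>P. x \<noteq> y \<longrightarrow> F x \<inter> F y = {})"
proof -
  define pick where "pick A = (SOME x. Q x \<and> F x \<inter> A = {})" for A
  have pick: "Q (pick A) \<and> F (pick A) \<inter> A = {}" if "finite A" for A
    unfolding pick_def using avoid[OF that] by (rule someI_ex)
  \<comment> \<open>U n is the union of the sets chosen in the first n rounds\<close>
  define U where "U = rec_nat {} (\<lambda>_ B. B \<union> F (pick B))"
  have U_0: "U 0 = {}" and U_Suc: "U (Suc n) = U n \<union> F (pick (U n))" for n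
    by (simp_all add: U_def)
  have U: "finite (U n)" for n
    by (induction n) (use pick F in \<open>auto simp: U_0 U_Suc\<close>)
  define f where "f n = pick (U n)" for n
  have f: "Q (f n)" "F (f n) \<inter> U n = {}" for n using pick U by (auto simp: f_def)
  have F_f_le_U: "F (f m) \<subseteq> U n" if "m < n" for m n
    using that by (induction n) (auto simp: U_Suc f_def less_Suc_eq)
  have disj: "F (f m) \<inter> F (f n) = {}" if "m < n" for m n
    using F_f_le_U[OF that] f(2)[of n] by blast
  have "inj f"
  proof (rule injI, rule ccontr)
    fix m n assume "f m = f n" "m \<noteq> n"
    then have "F (f m) = {}" using disj[of m n] disj[of n m] by (cases "m < n") auto
    then show False using F f(1) by blast
  qed
  moreover have "F x \<inter> F y = {}" if xy: "x \<in> range f" "y \<in> range f" "x \<noteq> y" for x y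
  proof -
    obtain m n where "x = f m" "y = f n" "m \<noteq> n" using xy by blast
    then show ?thesis using disj[of m n] disj[of n m] by (cases "m < n") auto
  qed
  ultimately show ?thesis using f(1) range_inj_infinite by blast
qed

theorem mainTheorem12:
  fixes M :: "'a set" and I :: "'r \<Rightarrow> 'a list \<Rightarrow> bool"
    and a b :: 'a and \<tau> :: "('a \<times> 'a) set"
  assumes "countable M"
    and "transitive_str M I"
    and "aleph0_categorical M I"
    and "no_algebraicity M I"
    and "weak_EI M I"
    and "a \<in> M" and "b \<in> M" and "a \<noteq> b"
    and "\<exists>c\<in>M. \<exists>d\<in>M. c \<noteq> d \<and> \<tau> = tp M I c d"
  shows "\<exists>k::nat.
     (\<forall>A. finite A \<longrightarrow> A \<subseteq> M \<longrightarrow>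
        (\<exists>ys. alt_path M \<tau> a b ys \<and> path_len ys = k \<and> interior ys \<inter> A = {}))
   \<and> (\<exists>P. infinite P \<and> (\<forall>ys\<in>P. alt_path M \<tau> a b ys \<and> path_len ys = k)
        \<and> (\<forall>ys\<in>P. \<forall>zs\<in>P. ys \<noteq> zs \<longrightarrow> interior ys \<inter> interior zs = {}))"
proof -
  note na = \<open>no_algebraicity M I\<close>
  obtain c d where cd: "c \<in> M" "d \<in> M" "c \<noteq> d" and \<tau>: "\<tau> = tp M I c d" using assms(9) by blast
  have "alt_connected M \<tau> a b"
    unfolding \<tau> using alt_connected_universal[OF na \<open>weak_EI M I\<close> \<open>transitive_str M I\<close> cd] assms(6,7) .
  then obtain ys where ys: "alt_path M \<tau> a b ys" using \<open>a \<noteq> b\<close> by (auto simp: alt_connected_def)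
  let ?Q = "\<lambda>zs. alt_path M \<tau> a b zs \<and> path_len zs = path_len ys"
  have avoid: "\<exists>zs. ?Q zs \<and> interior zs \<inter> A = {}" if "finite A" for A
    using alt_path_interior_avoiding[OF na ys[unfolded \<tau>] \<open>a \<noteq> b\<close> that] \<tau> by simp
  moreover have "interior zs \<noteq> {} \<and> finite (interior zs)" if "?Q zs" for zs
    using alt_path_interior(2,3)[of M \<tau> a b zs] that \<open>a \<noteq> b\<close> by blast
  ultimately have "\<exists>P. infinite P \<and> (\<forall>zs\<in>P. ?Q zs)
      \<and> (\<forall>zs\<in>P. \<forall>zs'\<in>P. zs \<noteq> zs' \<longrightarrow> interior zs \<inter> interior zs' = {})"
    by (rule infinite_disjoint_family_if_avoids_finite)
  moreover have "\<forall>A. finite A \<longrightarrow> A \<subseteq> M \<longrightarrow>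
      (\<exists>zs. alt_path M \<tau> a b zs \<and> path_len zs = path_len ys \<and> interior zs \<inter> A = {})"
    using avoid by simp
  ultimately show ?thesis by blast
qed

end
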